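(* Let $m>0$, let $n$ be an odd positive integer, let $\epsilon>0$, and let $V=[-m/2,m/2]$. For every $\epsilon$-differentially private facility location mechanism $\mathcal{M}:V^n\to V$ there exists a dataset $D\in V^n$ such that $$\mathrm{FAIR}(D,\mathcal{M}(D))\ge m/2$$ with probability at least $\frac{1}{1+e^{\epsilon}}$ (over the randomness of $\mathcal{M}$).
   Context: A dataset is $D=(x_1,\dots,x_n)\in V^n$ of agent locations, treated as a multiset and indexed so that $x_1\le x_2\le\dots\le x_n$. Since $n$ is odd, the optimal (social-welfare maximizing) facility location is the median $\mathcal{T}(D)=x_{\lceil n/2\rceil}$. Agent $i$'s utility for a facility at $\ell$ is $-|x_i-\ell|$. The individual loss vector is $\mathrm{LOSS}(D,\ell)_i=-|x_i-\mathcal{T}(D)|+|x_i-\ell|$ and $\mathrm{FAIR}(D,\ell)=\max_{1\le i\le n}\mathrm{LOSS}(D,\ell)_i$. Two datasets are neighboring if, as multisets, they differ in exactly one element (one agent's location is changed). A randomized mechanism $\mathcal{M}:V^n\to V$ is $\epsilon$-differentially private if $\Pr[\mathcal{M}(D)\in S]\le e^{\epsilon}\Pr[\mathcal{M}(D')\in S]$ for all neighboring $D,D'$ and all measurable $S\subseteq V$. *)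

theory Defs
  imports "HOL-Probability.Probability" "HOL-Library.Multiset"
begin

definition dataset_in :: "nat \<Rightarrow> real set \<Rightarrow> real multiset \<Rightarrow> bool" where
  "dataset_in n V D \<longleftrightarrow> size D = n \<and> set_mset D \<subseteq> V"

text \<open>Median T(D) = x_{ceil(n/2)} (1-indexed, sorted) = sorted list at index n div 2 (0-indexed), n odd.\<close>
definition opt_loc :: "real multiset \<Rightarrow> real" where
  "opt_loc D = sorted_list_of_multiset D ! (size D div 2)"

definition LOSS :: "real multiset \<Rightarrow> real \<Rightarrow> real \<Rightarrow> real" where
  "LOSS D l x = - \<bar>x - opt_loc D\<bar> + \<bar>x - l\<bar>"

definition FAIR :: "real multiset \<Rightarrow> real \<Rightarrow> real" where
  "FAIR D l = Max ((\<lambda>x. LOSS D l x) ` set_mset D)"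

text \<open>Neighboring: as multisets they differ in exactly one element (one location changed).\<close>
definition neighboring :: "real multiset \<Rightarrow> real multiset \<Rightarrow> bool" where
  "neighboring D D' \<longleftrightarrow> size D = size D' \<and> size (D - D') = 1"

definition mechanism :: "nat \<Rightarrow> real set \<Rightarrow> (real multiset \<Rightarrow> real measure) \<Rightarrow> bool" where
  "mechanism n V M \<longleftrightarrow> (\<forall>D. dataset_in n V D \<longrightarrow>
      prob_space (M D) \<and> sets (M D) = sets borel \<and> measure (M D) V = 1)"

definition diff_private :: "real \<Rightarrow> nat \<Rightarrow> real set \<Rightarrow> (real multiset \<Rightarrow> real measure) \<Rightarrow> bool" where
  "diff_private \<epsilon> n V M \<longleftrightarrow> (\<forall>D D' S. dataset_in n V D \<longrightarrow> dataset_in n V D' \<longrightarrow>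
      neighboring D D' \<longrightarrow> S \<in> sets borel \<longrightarrow>
      measure (M D) S \<le> exp \<epsilon> * measure (M D') S)"

end

theory Submission
  imports Defs
begin

text \<open>Let \<open>n = 2k + 1\<close>. Put \<open>k\<close> agents at each end of \<open>V\<close> and the last agent either at
  \<open>-m/2\<close> (dataset \<open>D\<^sub>1\<close>) or at \<open>m/2\<close> (dataset \<open>D\<^sub>2\<close>). These datasets are neighbours, and
  their medians are \<open>-m/2\<close> and \<open>m/2\<close>. An output \<open>l \<ge> 0\<close> costs the agent at the median
  \<open>-m/2\<close> of \<open>D\<^sub>1\<close> at least \<open>m/2\<close>, and an output \<open>l < 0\<close> does the same for \<open>D\<^sub>2\<close>.
  If \<open>D\<^sub>1\<close> lands in \<open>[0,\<infinity>)\<close> with probability below \<open>1/(1+e\<^sup>\<epsilon>)\<close>, it lands in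
  \<open>(-\<infinity>,0)\<close> with probability above \<open>e\<^sup>\<epsilon>/(1+e\<^sup>\<epsilon>)\<close>, and privacy then forces \<open>D\<^sub>2\<close> to land
  there with probability above \<open>1/(1+e\<^sup>\<epsilon>)\<close>.\<close>

lemma LOSS_le_FAIR:
  assumes "x \<in># D"
  shows "LOSS D l x \<le> FAIR D l"
  unfolding FAIR_def using assms by simp

lemma opt_loc_in_mset:
  assumes "D \<noteq> {#}"
  shows "opt_loc D \<in># D"
proof -
  have "length (sorted_list_of_multiset D) = size D"
    by (metis mset_sorted_list_of_multiset size_mset)
  moreover have "size D div 2 < size D"
    using assms by (simp add: nonempty_has_size)
  ultimately show ?thesis
    unfolding opt_loc_def by (metis nth_mem set_sorted_list_of_multiset)
qed

lemma dist_opt_loc_le_FAIR: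
  assumes "D \<noteq> {#}"
  shows "\<bar>opt_loc D - l\<bar> \<le> FAIR D l"
  using LOSS_le_FAIR[OF opt_loc_in_mset[OF assms]] by (simp add: LOSS_def)

lemma borel_measurable_FAIR: "FAIR D \<in> borel_measurable borel"
  unfolding FAIR_def LOSS_def by measurable

lemma measure_le_measure_FAIR_ge:
  assumes "finite_measure P" and "sets P = sets borel" and "\<And>l. l \<in> S \<Longrightarrow> c \<le> FAIR D l"
  shows "measure P S \<le> measure P {l. c \<le> FAIR D l}"
  using assms borel_measurable_FAIR by (intro finite_measure.finite_measure_mono) auto

lemma opt_loc_two_point:
  fixes a b :: real
  assumes "a \<le> b" and "0 < i + j"
  shows "opt_loc (replicate_mset i a + replicate_mset j b) = (if (i + j) div 2 < i then a else b)"
proof -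
  have "sorted (replicate i a @ replicate j b)"
    using assms by (auto simp: sorted_append)
  then have "sorted_list_of_multiset (replicate_mset i a + replicate_mset j b)
      = replicate i a @ replicate j b"
    by (metis mset_append mset_replicate sorted_list_of_multiset_mset sorted_sort_id)
  moreover have "(i + j) div 2 - i < j" if "\<not> (i + j) div 2 < i"
    using that \<open>0 < i + j\<close> by linarith
  ultimately show ?thesis
    by (auto simp: opt_loc_def nth_append)
qed

lemma neighboring_add_mset:
  assumes "a \<noteq> b"
  shows "neighboring (add_mset a C) (add_mset b C)"
  using assms by (simp add: neighboring_def)

lemma prob_compl_or_dominating_ge:
  assumes "prob_space P" and "A \<in> sets P" and "0 \<le> c" and "measure P A \<le> c * q"
  shows "1 / (1 + c) \<le> measure P (space P - A) \<or> 1 / (1 + c) \<le> q"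
proof (rule ccontr)
  assume "\<not> ?thesis"
  then have compl: "measure P (space P - A) < 1 / (1 + c)" and q: "q < 1 / (1 + c)"
    by auto
  have "measure P (space P - A) = 1 - measure P A"
    using prob_space.prob_compl[OF assms(1,2)] .
  also have "\<dots> \<ge> 1 - c / (1 + c)"
  proof -
    have "c * q \<le> c * (1 / (1 + c))"
      using assms(3) q by (intro mult_left_mono) auto
    then show ?thesis
      using assms(4) by simp
  qed
  also have "1 - c / (1 + c) = 1 / (1 + c)"
    using assms(3) by (simp add: field_simps)
  finally show False
    using compl by simp
qed

lemma neighboring_datasets_with_medians_at_ends:
  fixes a b :: real
  assumes "a < b" and "odd n"
  obtains D1 D2 where "dataset_in n {a..b} D1" "dataset_in n {a..b} D2"
    "opt_loc D1 = a" "opt_loc D2 = b" "neighboring D1 D2"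
proof -
  obtain k where n: "n = Suc (2 * k)"
    using assms(2) by (metis oddE Suc_eq_plus1)
  define C where "C = replicate_mset k a + replicate_mset k b"
  have "opt_loc (add_mset a C) = a"
    using opt_loc_two_point[of a b "Suc k" k] assms(1) by (simp add: C_def)
  moreover have "opt_loc (add_mset b C) = b"
    using opt_loc_two_point[of a b k "Suc k"] assms(1) by (simp add: C_def)
  moreover have "dataset_in n {a..b} (add_mset x C)" if "x \<in> {a, b}" for x
    using that assms(1) n by (auto simp: dataset_in_def C_def)
  ultimately show ?thesis
    using that neighboring_add_mset[of a b C] assms(1) by blast
qed

theorem theorem5p1:
  fixes m \<epsilon> :: real and n :: nat and M :: "real multiset \<Rightarrow> real measure"
  assumes "m > 0" and "odd n" and "\<epsilon> > 0"
    and "mechanism n {-m/2..m/2} M"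
    and "diff_private \<epsilon> n {-m/2..m/2} M"
  shows "\<exists>D. dataset_in n {-m/2..m/2} D \<and>
           measure (M D) {l. FAIR D l \<ge> m/2} \<ge> 1 / (1 + exp \<epsilon>)"
proof -
  obtain D1 D2 where D: "dataset_in n {-m/2..m/2} D1" "dataset_in n {-m/2..m/2} D2"
    and med: "opt_loc D1 = -m/2" "opt_loc D2 = m/2" and "neighboring D1 D2"
    using neighboring_datasets_with_medians_at_ends[of "-m/2" "m/2" n] assms(1,2) by auto
  have nonempty: "D1 \<noteq> {#}" "D2 \<noteq> {#}"
    using D assms(2) by (auto simp: dataset_in_def)
  have P: "prob_space (M D)" "sets (M D) = sets borel" if "D \<in> {D1, D2}" for D
    using that D assms(4) by (auto simp: mechanism_def)
  have "m/2 \<le> FAIR D1 l" if "0 \<le> l" for l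
    using dist_opt_loc_le_FAIR[OF nonempty(1), of l] med(1) assms(1) that by arith
  then have fair1: "measure (M D1) {0..} \<le> measure (M D1) {l. m/2 \<le> FAIR D1 l}"
    using P[of D1] by (intro measure_le_measure_FAIR_ge prob_space.finite_measure) auto
  have "m/2 \<le> FAIR D2 l" if "l < 0" for l
    using dist_opt_loc_le_FAIR[OF nonempty(2), of l] med(2) assms(1) that by arith
  then have fair2: "measure (M D2) {..<0} \<le> measure (M D2) {l. m/2 \<le> FAIR D2 l}"
    using P[of D2] by (intro measure_le_measure_FAIR_ge prob_space.finite_measure) auto
  have "space (M D1) - {..<0} = {0..}"
    using sets_eq_imp_space_eq[OF P(2)] by auto
  moreover have "measure (M D1) {..<0} \<le> exp \<epsilon> * measure (M D2) {..<0}"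
    using assms(5) D \<open>neighboring D1 D2\<close> by (simp add: diff_private_def)
  ultimately have "1 / (1 + exp \<epsilon>) \<le> measure (M D1) {0..}
      \<or> 1 / (1 + exp \<epsilon>) \<le> measure (M D2) {..<0}"
    using prob_compl_or_dominating_ge[of "M D1" "{..<0}" "exp \<epsilon>"] P by auto
  then show ?thesis
    using D fair1 fair2 by force
qed

end
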